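(* Let $F(\xi,p)=(\sigma(\xi),f_{\xi_0}(p))$ be a step skew-product on $\Sigma_N\times I$, $I=[0,1]$, with $f_i$ $C^1$-diffeomorphisms onto their images, and let $\mathcal I_P,\mathcal I_R,A,\Sigma_A,\sigma_A,\pi$, $\overline{\,\cdot\,}$ be as in the context. Let $R(x)=1-x$ and let $G(\omega,x)=(\sigma_A(\omega),g_{\omega_0}(x))$ on $\Sigma_A\times I$ with $g_i=f_i$, $g_{i+N}=R\circ f_i\circ R$ for $i\in\mathcal I_P$ and $g_i=R\circ f_i$, $g_{i+N}=f_i\circ R$ for $i\in\mathcal I_R$. Let $C=\{\omega\in\Sigma_A\colon\omega_0\in\{1,\ldots,N\}\}$ and define $\Pi\colon\Sigma_A\times I\to\Sigma_N\times I$ by $\Pi(\omega,x)=(\pi(\omega),x)$ if $\omega\in C$ and $\Pi(\omega,x)=(\pi(\omega),R(x))$ otherwise. Then $\Pi$ is a two-to-one semi-conjugation between $G$ and $F$, i.e. $\Pi$ is continuous, surjective, every point has exactly two preimages, and $\Pi\circ G=F\circ\Pi$.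
   Context: $\mathcal I_P$ (resp. $\mathcal I_R$) is the set of $i$ such that $f_i$ preserves (resp. reverses) orientation. $A=(a_{ij})_{i,j=1}^{2N}$ with $a_{ij}=1$ if ($i\in\mathcal I_P$, $j\le N$), or ($i\in\mathcal I_R$, $j>N$), or ($i-N\in\mathcal I_P$, $j>N$), or ($i-N\in\mathcal I_R$, $j\le N$), and $a_{ij}=0$ otherwise. $\Sigma_A$ is the set of sequences $\omega\in\{1,\ldots,2N\}^{\mathbb Z}$ with $a_{\omega_n\omega_{n+1}}=1$ for all $n$, $\sigma_A$ its shift; $\overline i=i$ for $i\le N$, $\overline i=i-N$ for $i>N$; $\pi(\omega)_n=\overline{\omega_n}$. *)

theory Defs
  imports "HOL-Analysis.Analysis"
begin

definition Sigma_full :: "nat \<Rightarrow> (int \<Rightarrow> nat) set" where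
  "Sigma_full N = {\<xi>. \<forall>n. \<xi> n \<in> {1..N}}"

definition shift :: "(int \<Rightarrow> nat) \<Rightarrow> (int \<Rightarrow> nat)" where
  "shift \<xi> = (\<lambda>n. \<xi> (n + 1))"

definition seq_top :: "(int \<Rightarrow> nat) topology" where
  "seq_top = product_topology (\<lambda>_. discrete_topology (UNIV::nat set)) UNIV"

definition C1_diffeo_onto_image :: "(real \<Rightarrow> real) \<Rightarrow> bool" where
  "C1_diffeo_onto_image f \<longleftrightarrow>
     (\<exists>f'. (\<forall>x\<in>{0..1}. (f has_real_derivative f' x) (at x within {0..1}))
          \<and> continuous_on {0..1} f' \<and> (\<forall>x\<in>{0..1}. f' x \<noteq> 0))
     \<and> inj_on f {0..1}"

definition orient_pres :: "(real \<Rightarrow> real) \<Rightarrow> bool" where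
  "orient_pres f \<longleftrightarrow> (\<forall>x\<in>{0..1}. \<forall>y\<in>{0..1}. x < y \<longrightarrow> f x < f y)"

definition orient_rev :: "(real \<Rightarrow> real) \<Rightarrow> bool" where
  "orient_rev f \<longleftrightarrow> (\<forall>x\<in>{0..1}. \<forall>y\<in>{0..1}. x < y \<longrightarrow> f y < f x)"

definition IP :: "nat \<Rightarrow> (nat \<Rightarrow> real \<Rightarrow> real) \<Rightarrow> nat set" where
  "IP N f = {i\<in>{1..N}. orient_pres (f i)}"

definition IR :: "nat \<Rightarrow> (nat \<Rightarrow> real \<Rightarrow> real) \<Rightarrow> nat set" where
  "IR N f = {i\<in>{1..N}. orient_rev (f i)}"

definition amat :: "nat \<Rightarrow> (nat \<Rightarrow> real \<Rightarrow> real) \<Rightarrow> nat \<Rightarrow> nat \<Rightarrow> nat" where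
  "amat N f i j =
     (if (i \<in> IP N f \<and> j \<le> N) \<or> (i \<in> IR N f \<and> j > N)
         \<or> (i > N \<and> i - N \<in> IP N f \<and> j > N) \<or> (i > N \<and> i - N \<in> IR N f \<and> j \<le> N)
      then 1 else 0)"

definition Sigma_A :: "nat \<Rightarrow> (nat \<Rightarrow> real \<Rightarrow> real) \<Rightarrow> (int \<Rightarrow> nat) set" where
  "Sigma_A N f = {\<omega>. (\<forall>n. \<omega> n \<in> {1..2*N}) \<and> (\<forall>n. amat N f (\<omega> n) (\<omega> (n + 1)) = 1)}"

definition bar :: "nat \<Rightarrow> nat \<Rightarrow> nat" where
  "bar N i = (if i \<le> N then i else i - N)"

definition proj :: "nat \<Rightarrow> (int \<Rightarrow> nat) \<Rightarrow> (int \<Rightarrow> nat)" where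
  "proj N \<omega> = (\<lambda>n. bar N (\<omega> n))"

definition Rfl :: "real \<Rightarrow> real" where
  "Rfl x = 1 - x"

definition gmap :: "nat \<Rightarrow> (nat \<Rightarrow> real \<Rightarrow> real) \<Rightarrow> nat \<Rightarrow> real \<Rightarrow> real" where
  "gmap N f i =
     (if i \<le> N then (if i \<in> IP N f then f i else Rfl \<circ> f i)
      else (if i - N \<in> IP N f then Rfl \<circ> f (i - N) \<circ> Rfl else f (i - N) \<circ> Rfl))"

definition Fskew :: "(nat \<Rightarrow> real \<Rightarrow> real) \<Rightarrow> (int \<Rightarrow> nat) \<times> real \<Rightarrow> (int \<Rightarrow> nat) \<times> real" where
  "Fskew f z = (shift (fst z), f (fst z 0) (snd z))"

definition Gskew :: "nat \<Rightarrow> (nat \<Rightarrow> real \<Rightarrow> real) \<Rightarrow> (int \<Rightarrow> nat) \<times> real \<Rightarrow> (int \<Rightarrow> nat) \<times> real" where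
  "Gskew N f z = (shift (fst z), gmap N f (fst z 0) (snd z))"

definition BigPi :: "nat \<Rightarrow> (int \<Rightarrow> nat) \<times> real \<Rightarrow> (int \<Rightarrow> nat) \<times> real" where
  "BigPi N z = (proj N (fst z), if fst z 0 \<in> {1..N} then snd z else Rfl (snd z))"

end

theory Submission
  imports Defs
begin

(* Each f_i is continuous and injective on [0,1], hence strictly monotone: it either preserves
   or reverses orientation, and the transition matrix A says precisely that a sequence in
   Sigma_A switches between the lower copy {1..N} and the upper copy {N+1..2N} of the alphabet
   right after a symbol whose map reverses orientation. So a point of Sigma_A is determined by
   its projection xi and by the copy its 0-th symbol lies in, and both choices are admissible:
   the fibre of Pi over (xi, x) consists of a point (omega, x) with omega_0 in the lower copy and
   a point (omega', R x) with omega'_0 in the upper copy. Writing R^b for R if b and id otherwise, and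
   l_n for "omega_n lies in the upper copy", one has g_(omega_0) = R^(l_1) o f_(bar omega_0) o R^(l_0);
   since R is an involution this gives Pi o G = F o Pi. *)

lemma orient_pres_neq_orient_rev:
  assumes "C1_diffeo_onto_image g"
  shows "orient_pres g \<noteq> orient_rev g"
proof -
  from assms obtain g' where deriv: "\<forall>x\<in>{0..1}. (g has_real_derivative g' x) (at x within {0..1})"
    and inj: "inj_on g {0..1}"
    unfolding C1_diffeo_onto_image_def by blast
  have "continuous_on {0..1::real} g"
    using deriv by (intro DERIV_continuous_on) auto
  then have "strict_mono_on {0..1} g \<or> strict_antimono_on {0..1} g"
    using injective_eq_monotone_map inj by (simp add: is_interval_cc)
  then have "orient_pres g \<or> orient_rev g"
    unfolding orient_pres_def orient_rev_def monotone_on_def by blast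
  moreover have "\<not> (orient_pres g \<and> orient_rev g)"
    unfolding orient_pres_def orient_rev_def
    by (metis atLeastAtMost_iff less_asym' zero_le_one zero_less_one order_refl)
  ultimately show ?thesis by blast
qed

lemma IP_eq_Diff_IR:
  assumes "\<forall>i\<in>{1..N}. C1_diffeo_onto_image (f i)"
  shows "IP N f = {1..N} - IR N f"
  using assms orient_pres_neq_orient_rev unfolding IP_def IR_def by blast

definition switch_seq :: "(int \<Rightarrow> bool) \<Rightarrow> bool \<Rightarrow> int \<Rightarrow> bool" where
  "switch_seq r c n = (c \<noteq> odd (card {k \<in> {0..<n} \<union> {n..<0}. r k}))"

lemma switch_seq_0 [simp]: "switch_seq r c 0 = c"
  by (simp add: switch_seq_def)

lemma switch_seq_step: "switch_seq r c (n + 1) = (switch_seq r c n \<noteq> r n)"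
proof -
  define S where "S m = {k \<in> {0..<m} \<union> {m..<0}. r k}" for m :: int
  have fin: "finite (S m)" for m
    unfolding S_def by (rule finite_subset[of _ "{min 0 m..<max 0 m}"]) auto
  have "S (n + 1) = (if r n then insert n (S n) else S n) \<and> n \<notin> S n" if "0 \<le> n"
    using that unfolding S_def by (auto simp: le_less)
  moreover have "S n = (if r n then insert n (S (n + 1)) else S (n + 1)) \<and> n \<notin> S (n + 1)" if "n < 0"
    using that unfolding S_def by (auto simp: le_less)
  ultimately show ?thesis
    unfolding switch_seq_def S_def[symmetric] using fin
    by (cases "0 \<le> n") auto
qed

lemma switch_seq_unique:
  assumes "b 0 = c" and "\<And>n. b (n + 1) = (b n \<noteq> r n)"
  shows "b = switch_seq r c"
proof
  fix n :: int
  show "b n = switch_seq r c n"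
  proof (induction n rule: int_induct[where k = 0])
    case base
    then show ?case using assms(1) by simp
  next
    case (step1 i)
    then show ?case using assms(2) switch_seq_step by simp
  next
    case (step2 i)
    then show ?case using assms(2)[of "i - 1"] switch_seq_step[of r c "i - 1"] by auto
  qed
qed

lemma amat_eq_1_iff:
  assumes "IP N f = {1..N} - IR N f" and "i \<in> {1..2*N}" and "j \<in> {1..2*N}"
  shows "amat N f i j = 1 \<longleftrightarrow> ((N < j) = ((N < i) \<noteq> (bar N i \<in> IR N f)))"
proof -
  have "IR N f \<subseteq> {1..N}" unfolding IR_def by blast
  then show ?thesis using assms unfolding amat_def bar_def by (cases "i \<le> N") auto
qed

definition flip_if :: "bool \<Rightarrow> real \<Rightarrow> real" where
  "flip_if b = (if b then Rfl else id)"

lemma flip_if_flip_if [simp]: "flip_if b (flip_if b x) = x"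
  by (simp add: flip_if_def Rfl_def)

lemma flip_if_unit_interval: "x \<in> {0..1} \<Longrightarrow> flip_if b x \<in> {0..1}"
  by (simp add: flip_if_def Rfl_def)

lemma gmap_eq:
  assumes "IP N f = {1..N} - IR N f" and "i \<in> {1..2*N}"
  shows "gmap N f i = flip_if ((N < i) \<noteq> (bar N i \<in> IR N f)) \<circ> f (bar N i) \<circ> flip_if (N < i)"
proof (cases "i \<le> N")
  case True
  with assms show ?thesis unfolding gmap_def bar_def flip_if_def by simp
next
  case False
  with assms show ?thesis unfolding gmap_def bar_def flip_if_def by simp
qed

lemma BigPi_eq:
  assumes "1 \<le> \<omega> 0"
  shows "BigPi N (\<omega>, x) = (proj N \<omega>, flip_if (N < \<omega> 0) x)"
  using assms unfolding BigPi_def flip_if_def by auto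

definition lift_seq :: "nat \<Rightarrow> (int \<Rightarrow> nat) \<Rightarrow> (int \<Rightarrow> bool) \<Rightarrow> int \<Rightarrow> nat" where
  "lift_seq N \<xi> b n = \<xi> n + (if b n then N else 0)"

lemma bar_lift_seq: "\<xi> n \<in> {1..N} \<Longrightarrow> bar N (lift_seq N \<xi> b n) = \<xi> n"
  unfolding lift_seq_def bar_def by auto

lemma less_lift_seq_iff: "\<xi> n \<in> {1..N} \<Longrightarrow> N < lift_seq N \<xi> b n \<longleftrightarrow> b n"
  unfolding lift_seq_def by auto

lemma proj_lift_seq:
  assumes "\<xi> \<in> Sigma_full N"
  shows "proj N (lift_seq N \<xi> b) = \<xi>"
  using assms bar_lift_seq unfolding Sigma_full_def proj_def by blast

lemma lift_seq_in_Sigma_A_iff: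
  assumes "IP N f = {1..N} - IR N f" and "\<xi> \<in> Sigma_full N"
  shows "lift_seq N \<xi> b \<in> Sigma_A N f \<longleftrightarrow> (\<forall>n. b (n + 1) = (b n \<noteq> (\<xi> n \<in> IR N f)))"
proof -
  have \<xi>: "\<xi> n \<in> {1..N}" for n
    using assms(2) unfolding Sigma_full_def by blast
  have range: "lift_seq N \<xi> b n \<in> {1..2*N}" for n
    using \<xi>[of n] unfolding lift_seq_def by auto
  show ?thesis
    unfolding Sigma_A_def
    using amat_eq_1_iff[OF assms(1) range range] range less_lift_seq_iff[OF \<xi>] bar_lift_seq[OF \<xi>]
    by auto
qed

lemma proj_in_Sigma_full:
  assumes "\<omega> \<in> Sigma_A N f"
  shows "proj N \<omega> \<in> Sigma_full N"
  using assms unfolding Sigma_A_def Sigma_full_def proj_def bar_def by fastforce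

lemma lift_seq_proj:
  assumes "\<omega> \<in> Sigma_A N f"
  shows "lift_seq N (proj N \<omega>) (\<lambda>n. N < \<omega> n) = \<omega>"
proof
  fix n
  have "\<omega> n \<in> {1..2*N}"
    using assms unfolding Sigma_A_def by blast
  then show "lift_seq N (proj N \<omega>) (\<lambda>n. N < \<omega> n) n = \<omega> n"
    unfolding proj_def lift_seq_def bar_def by auto
qed

lemma BigPi_lift_seq:
  assumes "\<xi> \<in> Sigma_full N"
  shows "BigPi N (lift_seq N \<xi> b, x) = (\<xi>, flip_if (b 0) x)"
proof -
  have "\<xi> 0 \<in> {1..N}"
    using assms unfolding Sigma_full_def by blast
  then have "1 \<le> lift_seq N \<xi> b 0" and "N < lift_seq N \<xi> b 0 \<longleftrightarrow> b 0"
    unfolding lift_seq_def by auto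
  then show ?thesis
    using BigPi_eq proj_lift_seq[OF assms] by simp
qed

lemma BigPi_fiber:
  assumes IP_IR: "IP N f = {1..N} - IR N f" and \<xi>: "\<xi> \<in> Sigma_full N" and x: "x \<in> {0..1}"
  shows "{z \<in> Sigma_A N f \<times> {0..1}. BigPi N z = (\<xi>, x)}
           = range (\<lambda>c. (lift_seq N \<xi> (switch_seq (\<lambda>n. \<xi> n \<in> IR N f) c), flip_if c x))"
    (is "?fiber = range ?point")
proof
  let ?r = "\<lambda>n. \<xi> n \<in> IR N f"
  show "range ?point \<subseteq> ?fiber"
  proof (rule image_subsetI)
    fix c
    have "lift_seq N \<xi> (switch_seq ?r c) \<in> Sigma_A N f"
      unfolding lift_seq_in_Sigma_A_iff[OF IP_IR \<xi>] by (simp add: switch_seq_step)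
    then show "?point c \<in> ?fiber"
      using x flip_if_unit_interval BigPi_lift_seq[OF \<xi>] by simp
  qed
  show "?fiber \<subseteq> range ?point"
  proof
    fix z
    assume "z \<in> ?fiber"
    then obtain \<omega> x' where z: "z = (\<omega>, x')" and \<omega>: "\<omega> \<in> Sigma_A N f"
      and fiber: "BigPi N (\<omega>, x') = (\<xi>, x)"
      by auto
    have proj: "proj N \<omega> = \<xi>"
      using fiber unfolding BigPi_def by simp
    define b where "b n = (N < \<omega> n)" for n
    have \<omega>_lift: "\<omega> = lift_seq N \<xi> b"
      using lift_seq_proj[OF \<omega>, symmetric] unfolding proj b_def .
    have "\<forall>n. b (n + 1) = (b n \<noteq> ?r n)"
      using \<omega> unfolding \<omega>_lift lift_seq_in_Sigma_A_iff[OF IP_IR \<xi>] .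
    then have b: "switch_seq ?r (b 0) = b"
      by (auto intro!: switch_seq_unique[symmetric])
    have "flip_if (b 0) x' = x"
      using fiber BigPi_lift_seq[OF \<xi>, of b x'] unfolding \<omega>_lift by simp
    then have x': "flip_if (b 0) x = x'"
      using flip_if_flip_if[of "b 0" x'] by simp
    have "z = ?point (b 0)"
      unfolding z \<omega>_lift by (simp only: b x')
    then show "z \<in> range ?point"
      by (rule range_eqI)
  qed
qed

lemma card_BigPi_fiber:
  assumes IP_IR: "IP N f = {1..N} - IR N f" and "\<xi> \<in> Sigma_full N" and "x \<in> {0..1}"
  shows "card {z \<in> Sigma_A N f \<times> {0..1}. BigPi N z = (\<xi>, x)} = 2"
proof -
  let ?point = "\<lambda>c. (lift_seq N \<xi> (switch_seq (\<lambda>n. \<xi> n \<in> IR N f) c), flip_if c x)"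
  have "\<xi> 0 \<in> {1..N}"
    using assms(2) unfolding Sigma_full_def by blast
  then have "inj ?point"
    by (intro inj_on_inverseI[where g = "\<lambda>z. N < fst z 0"]) (simp add: less_lift_seq_iff)
  then show ?thesis
    unfolding BigPi_fiber[OF assms] by (simp add: card_image)
qed

lemma BigPi_in_Sigma_full:
  assumes "z \<in> Sigma_A N f \<times> {0..1}"
  shows "BigPi N z \<in> Sigma_full N \<times> {0..1}"
proof -
  obtain \<omega> x where z: "z = (\<omega>, x)" and \<omega>: "\<omega> \<in> Sigma_A N f" and x: "x \<in> {0..1}"
    using assms by blast
  have "1 \<le> \<omega> 0"
    using \<omega> unfolding Sigma_A_def by auto
  then show ?thesis
    unfolding z using BigPi_eq proj_in_Sigma_full[OF \<omega>] flip_if_unit_interval[OF x] by simp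
qed

lemma continuous_map_BigPi:
  "continuous_map (subtopology (prod_topology seq_top euclideanreal) S)
     (prod_topology seq_top euclideanreal) (BigPi N)"
proof -
  let ?X = "subtopology (prod_topology seq_top euclideanreal) S"
  have coord: "continuous_map ?X (discrete_topology UNIV) (\<lambda>z. fst z k)" for k
  proof -
    have "continuous_map seq_top (discrete_topology UNIV) (\<lambda>\<omega>. \<omega> k)"
      unfolding seq_top_def by (rule continuous_map_product_projection) simp
    then have "continuous_map (prod_topology seq_top euclideanreal) (discrete_topology UNIV) (\<lambda>z. fst z k)"
      using continuous_map_compose[OF continuous_map_fst] by (simp add: o_def)
    then show ?thesis
      by (rule continuous_map_from_subtopology)
  qed
  have "continuous_map ?X (product_topology (\<lambda>_. discrete_topology UNIV) UNIV) (proj N \<circ> fst)"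
    unfolding continuous_map_componentwise_UNIV
  proof
    fix k
    have "continuous_map (discrete_topology UNIV) (discrete_topology UNIV) (bar N)"
      by simp
    from continuous_map_compose[OF coord this]
    show "continuous_map ?X (discrete_topology UNIV) (\<lambda>z. (proj N \<circ> fst) z k)"
      by (simp add: o_def proj_def)
  qed
  then have "continuous_map ?X seq_top (proj N \<circ> fst)"
    unfolding seq_top_def .
  moreover have "continuous_map ?X euclideanreal snd"
    by (rule continuous_map_from_subtopology) (rule continuous_map_snd)
  then have "continuous_map ?X euclideanreal (\<lambda>z. if fst z 0 \<in> {1..N} then snd z else Rfl (snd z))"
    unfolding Rfl_def
    by (intro continuous_map_cases_function[where p = "\<lambda>z. fst z 0" and Z = "discrete_topology UNIV", OF coord])
       (auto intro: continuous_map_from_subtopology continuous_intros)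
  ultimately show ?thesis
    unfolding continuous_map_pairwise by (simp add: o_def BigPi_def)
qed

lemma BigPi_Gskew:
  assumes IP_IR: "IP N f = {1..N} - IR N f" and \<omega>: "\<omega> \<in> Sigma_A N f"
  shows "BigPi N (Gskew N f (\<omega>, x)) = Fskew f (BigPi N (\<omega>, x))"
proof -
  have range: "\<omega> n \<in> {1..2*N}" for n
    using \<omega> unfolding Sigma_A_def by blast
  have "amat N f (\<omega> 0) (\<omega> (0 + 1)) = 1"
    using \<omega> unfolding Sigma_A_def by blast
  then have step: "(N < \<omega> 1) = ((N < \<omega> 0) \<noteq> (bar N (\<omega> 0) \<in> IR N f))"
    using amat_eq_1_iff[OF IP_IR range range] by simp
  have "BigPi N (Gskew N f (\<omega>, x)) = (proj N (shift \<omega>), flip_if (N < \<omega> 1) (gmap N f (\<omega> 0) x))"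
    using BigPi_eq range[of 1] unfolding Gskew_def shift_def by auto
  also have "\<dots> = (shift (proj N \<omega>), f (bar N (\<omega> 0)) (flip_if (N < \<omega> 0) x))"
    using gmap_eq[OF IP_IR range] step unfolding shift_def proj_def by simp
  also have "\<dots> = Fskew f (BigPi N (\<omega>, x))"
    using BigPi_eq range[of 0] unfolding Fskew_def proj_def by auto
  finally show ?thesis .
qed

theorem lemma3p5:
  fixes N :: nat and f :: "nat \<Rightarrow> real \<Rightarrow> real"
  assumes "N \<ge> 1"
    and "\<forall>i\<in>{1..N}. C1_diffeo_onto_image (f i) \<and> f i ` {0..1} \<subseteq> {0..1}"
  shows "continuous_map
           (subtopology (prod_topology seq_top euclideanreal) (Sigma_A N f \<times> {0..1}))
           (subtopology (prod_topology seq_top euclideanreal) (Sigma_full N \<times> {0..1}))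
           (BigPi N)
       \<and> BigPi N ` (Sigma_A N f \<times> {0..1}) = Sigma_full N \<times> {0..1}
       \<and> (\<forall>y\<in>Sigma_full N \<times> {0..1}. card {z\<in>Sigma_A N f \<times> {0..1}. BigPi N z = y} = 2)
       \<and> (\<forall>z\<in>Sigma_A N f \<times> {0..1}. BigPi N (Gskew N f z) = Fskew f (BigPi N z))"
proof -
  \<comment> \<open>Neither \<open>N \<ge> 1\<close> (for \<open>N = 0\<close> both spaces are empty) nor the invariance of \<open>{0..1}\<close>
    under the \<open>f i\<close> is needed.\<close>
  have IP_IR: "IP N f = {1..N} - IR N f"
    by (rule IP_eq_Diff_IR) (use assms(2) in blast)
  have into: "BigPi N ` (Sigma_A N f \<times> {0..1}) \<subseteq> Sigma_full N \<times> {0..1}"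
    by (rule image_subsetI) (rule BigPi_in_Sigma_full)
  have fibers: "\<forall>y\<in>Sigma_full N \<times> {0..1}. card {z\<in>Sigma_A N f \<times> {0..1}. BigPi N z = y} = 2"
    by (intro ballI, elim SigmaE) (simp add: card_BigPi_fiber[OF IP_IR])
  have onto: "y \<in> BigPi N ` (Sigma_A N f \<times> {0..1})" if "y \<in> Sigma_full N \<times> {0..1}" for y
  proof -
    have "card {z\<in>Sigma_A N f \<times> {0..1}. BigPi N z = y} > 0"
      using bspec[OF fibers that] by simp
    then obtain z where "z \<in> Sigma_A N f \<times> {0..1}" and "BigPi N z = y"
      unfolding card_gt_0_iff by blast
    then show ?thesis
      by (rule rev_image_eqI[OF _ sym])
  qed
  have "continuous_map
      (subtopology (prod_topology seq_top euclideanreal) (Sigma_A N f \<times> {0..1}))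
      (subtopology (prod_topology seq_top euclideanreal) (Sigma_full N \<times> {0..1})) (BigPi N)"
    by (intro continuous_map_into_subtopology continuous_map_BigPi Pi_I BigPi_in_Sigma_full[of _ N f]) simp
  moreover have "\<forall>z\<in>Sigma_A N f \<times> {0..1}. BigPi N (Gskew N f z) = Fskew f (BigPi N z)"
    by (intro ballI, elim SigmaE) (simp add: BigPi_Gskew[OF IP_IR])
  ultimately show ?thesis
    using equalityI[OF into subsetI[OF onto]] fibers by blast
qed

end
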